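(* Let $p\in\mathbb{N}$ and suppose $f\in A_p$ is reversible in $G$ but not flowable. Let $d,q,\delta$ and $\omega$ be as described in the context. Then: (1) If $g\in R_f(G)$, then $g$ commutes with $\omega$, and $g$ reverses $f^{r/d}$ for each $r\in\mathbb{Z}$. (2) $\delta=q$, and $p/q$ is odd. (3) If $\omega$ is chosen with $m(\omega)=e^{2\pi i/\delta}$, then $\{g^2: g\in R_f(G)\}=\{\omega^l: l \text{ odd}\}$; and (for any choice of generator $\omega$) the set of orders of reversers is $\{\mathrm{ord}(g): g\in R_f(G)\}=\{2r: r\in\mathbb{N},\ r\mid q,\ q/r \text{ odd}\}$.
   Context: $G$ denotes the group (under composition) of biholomorphic germs at $0$ in one complex variable: germs of functions holomorphic near $0$ with $f(0)=0$ and $f'(0)\neq 0$; $m(f)=f'(0)$ is the multiplier. $G_1=\{f\in G: f'(0)=1\}$, and for $p\in\mathbb{N}$, $G_p=\{f\in G_1: f^{(k)}(0)=0 \text{ for } 2\le k\le p\}$ and $A_p=G_p\setminus G_{p+1}$. For $f\in G$, $R_f(G)$ is the set of $g\in G$ with $g^{-1}\circ f\circ g=f^{-1}$ ($g$ reverses $f$), $f$ is reversible if $R_f(G)\ne\emptyset$, and $C_f(K)$ denotes the centraliser of $f$ in a subgroup $K$. A flow in $G_1$ is a continuous group homomorphism $t\mapsto f_t$ from $(\mathbb{R},+)$ or $(\mathbb{C},+)$ into $G_1$; $f\in G_1$ is flowable if $f=f_1$ for some flow. For $f\in A_p$ not flowable, it is known that $C_f(G)$ is abelian, $C_f(G_1)$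 is infinite cyclic with a unique generator $f^{1/d}$ satisfying $(f^{1/d})^d=f$ for a positive integer $d$ (and $f^{r/d}$ denotes $(f^{1/d})^r$), $q$ denotes the index of $C_f(G_1)$ in $C_f(G)$ (the quotient is cyclic of order $q$, with $q\mid p$), $\delta$ denotes the order of the torsion subgroup of $C_f(G)$, which is cyclic, and $\omega$ denotes a generator of this torsion subgroup. *)

theory Defs
  imports "HOL-Analysis.Analysis" "HOL-Computational_Algebra.Formal_Power_Series"
begin

text \<open>Germs of holomorphic functions at 0 are represented by their Taylor series at 0,
  i.e. complex formal power series with positive radius of convergence.
  Composition of germs f \<circ> g is fps composition f oo g, the identity germ is fps_X,
  the inverse germ is the compositional inverse fps_inv.\<close>

definition germG :: "complex fps set" where
  "germG = {f. fps_conv_radius f > 0 \<and> fps_nth f 0 = 0 \<and> fps_nth f 1 \<noteq> 0}"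

definition mult :: "complex fps \<Rightarrow> complex" where
  "mult f = fps_nth f 1"

definition germG1 :: "complex fps set" where
  "germG1 = {f \<in> germG. fps_nth f 1 = 1}"

text \<open>f^(k)(0) = k! * fps_nth f k, so vanishing of derivatives is vanishing of coefficients.\<close>
definition germGp :: "nat \<Rightarrow> complex fps set" where
  "germGp p = {f \<in> germG1. \<forall>k. 2 \<le> k \<and> k \<le> p \<longrightarrow> fps_nth f k = 0}"

definition germAp :: "nat \<Rightarrow> complex fps set" where
  "germAp p = germGp p - germGp (Suc p)"

definition gnpow :: "complex fps \<Rightarrow> nat \<Rightarrow> complex fps" where
  "gnpow f n = ((\<lambda>g. f oo g) ^^ n) fps_X"

definition gipow :: "complex fps \<Rightarrow> int \<Rightarrow> complex fps" where
  "gipow f k = (if 0 \<le> k then gnpow f (nat k) else gnpow (fps_inv f) (nat (- k)))"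

definition reversers :: "complex fps \<Rightarrow> complex fps set" where
  "reversers f = {g \<in> germG. fps_inv g oo f oo g = fps_inv f}"

definition reversible :: "complex fps \<Rightarrow> bool" where
  "reversible f \<longleftrightarrow> reversers f \<noteq> {}"

definition centraliser :: "complex fps \<Rightarrow> complex fps set \<Rightarrow> complex fps set" where
  "centraliser f K = {g \<in> K. g oo f = f oo g}"

text \<open>Flows: continuous homomorphisms (R,+) \<rightarrow> G1 or (C,+) \<rightarrow> G1; continuity is
  with respect to the topology of coefficientwise convergence on germs.\<close>
definition real_flow :: "(real \<Rightarrow> complex fps) \<Rightarrow> bool" where
  "real_flow \<phi> \<longleftrightarrow> (\<forall>t. \<phi> t \<in> germG1) \<and> (\<forall>s t. \<phi> (s + t) = \<phi> s oo \<phi> t)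
     \<and> (\<forall>n. continuous_on UNIV (\<lambda>t. fps_nth (\<phi> t) n))"

definition complex_flow :: "(complex \<Rightarrow> complex fps) \<Rightarrow> bool" where
  "complex_flow \<phi> \<longleftrightarrow> (\<forall>t. \<phi> t \<in> germG1) \<and> (\<forall>s t. \<phi> (s + t) = \<phi> s oo \<phi> t)
     \<and> (\<forall>n. continuous_on UNIV (\<lambda>t. fps_nth (\<phi> t) n))"

definition flowable :: "complex fps \<Rightarrow> bool" where
  "flowable f \<longleftrightarrow> f \<in> germG1 \<and>
     ((\<exists>\<phi>. real_flow \<phi> \<and> \<phi> 1 = f) \<or> (\<exists>\<phi>. complex_flow \<phi> \<and> \<phi> 1 = f))"

definition gcoset :: "complex fps \<Rightarrow> complex fps set \<Rightarrow> complex fps set" where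
  "gcoset g H = (\<lambda>h. g oo h) ` H"

definition gindex :: "complex fps set \<Rightarrow> complex fps set \<Rightarrow> nat" where
  "gindex K H = card {gcoset g H | g. g \<in> K}"

definition torsion :: "complex fps set \<Rightarrow> complex fps set" where
  "torsion K = {g \<in> K. \<exists>n>0. gnpow g n = fps_X}"

text \<open>Order of a germ; 0 encodes infinite order.\<close>
definition gord :: "complex fps \<Rightarrow> nat" where
  "gord g = (if \<exists>n>0. gnpow g n = fps_X then (LEAST n. n > 0 \<and> gnpow g n = fps_X) else 0)"

end

theory Submission
  imports Defs "HOL-Complex_Analysis.Complex_Analysis"
begin

text \<open>
  Comparing the coefficients of \<open>z^(p+1)\<close> in \<open>x \<circ> f = f \<circ> x\<close> and in \<open>f \<circ> g = g \<circ> f\<inverse>\<close> gives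
  \<open>m(x)^p = 1\<close> on \<open>C = C_f(G)\<close> and \<open>m(g)^p = -1\<close> for every reverser \<open>g\<close>. The kernel \<open>\<langle>h\<rangle>\<close> of
  \<open>m\<close> on \<open>C\<close> is infinite cyclic with \<open>h^d = f\<close>, so a conjugate of \<open>h\<close> lying in it is determined by
  its \<open>d\<close>-th power: \<open>h\<close> is central in \<open>C\<close> and reversers invert it. Hence \<open>m(C)\<close> is the group of
  \<open>q\<close>-th roots of unity for some \<open>q | p\<close>, a torsion element of \<open>C\<close> is determined by its multiplier,
  and reversers commute with the torsion. Writing \<open>m(g) = exp(\<pi> i s / p)\<close> with \<open>s\<close> odd shows that
  \<open>p/q\<close> is odd and that \<open>m(g^2)\<close> is an odd power of \<open>\<zeta> = exp(2 \<pi> i / q)\<close>. Conjugating \<open>c^q\<close> and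
  \<open>g^2\<close> by \<open>g\<close>, for \<open>m(c) = \<zeta>\<close>, corrects \<open>c\<close> by a power of \<open>h\<close> to a torsion element with
  multiplier \<open>\<zeta>\<close>; so the torsion is cyclic of order \<open>q\<close>, \<open>g^2 = \<omega>^a\<close> with \<open>a\<close> odd, and
  \<open>ord g = 2q / gcd(a, q)\<close>.
\<close>

section \<open>Convergence of composition and inversion\<close>

lemma fps_conv_radius_compose_pos:
  fixes f g :: "complex fps"
  assumes "fps_conv_radius f > 0" and "fps_nth f 0 = 0" and "fps_conv_radius g > 0"
  shows "fps_conv_radius (g oo f) > 0"
proof -
  have "(eval_fps g \<circ> eval_fps f) has_fps_expansion (g oo f)"
    using assms by (intro has_fps_expansion_compose eval_fps_has_fps_expansion)
  thus ?thesis by (simp add: has_fps_expansion_def)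
qed

lemma fps_conv_radius_fps_inv_pos:
  fixes g :: "complex fps"
  assumes rg: "fps_conv_radius g > 0" and g0: "fps_nth g 0 = 0" and g1: "fps_nth g 1 \<noteq> 0"
  shows "fps_conv_radius (fps_inv g) > 0"
proof -
  define R where "R = eball (0::complex) (fps_conv_radius g)"
  have hol: "eval_fps g holomorphic_on R" unfolding R_def by (intro holomorphic_on_eval_fps) auto
  have "0 \<in> R" using rg by (auto simp: R_def zero_ereal_def)
  have "deriv (eval_fps g) 0 = fps_nth g 1"
    using eval_fps_deriv[of 0 g] rg by (simp add: eval_fps_at_0 zero_ereal_def fps_deriv_def)
  then obtain r where r: "r > 0" "ball 0 r \<subseteq> R" "inj_on (eval_fps g) (ball 0 r)"
    using has_complex_derivative_locally_injective[OF hol \<open>0 \<in> R\<close>] g1 by (auto simp: R_def)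
  have hol_r: "eval_fps g holomorphic_on ball 0 r" using hol r(2) by (rule holomorphic_on_subset)
  obtain \<psi> where \<psi>: "\<psi> holomorphic_on eval_fps g ` ball 0 r"
      "\<And>z. z \<in> ball 0 r \<Longrightarrow> \<psi> (eval_fps g z) = z"
    using holomorphic_has_inverse[OF hol_r open_ball r(3)] by metis
  define V where "V = eval_fps g ` ball 0 r"
  have "open V" unfolding V_def by (rule open_mapping_thm3[OF hol_r open_ball r(3)])
  have "0 \<in> V" unfolding V_def using r(1) g0 by (auto simp: eval_fps_at_0 intro!: image_eqI[of 0 _ 0])
  define P where "P = fps_expansion \<psi> 0"
  have P: "\<psi> has_fps_expansion P"
    using \<psi>(1) \<open>open V\<close> \<open>0 \<in> V\<close> unfolding V_def[symmetric] P_def by blast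
  have P0: "fps_nth P 0 = 0"
    using \<psi>(2)[of 0] r(1) g0 by (simp add: P_def fps_expansion_def eval_fps_at_0)
  have "eventually (\<lambda>w. w \<in> V) (nhds 0)" by (rule eventually_nhds_in_open[OF \<open>open V\<close> \<open>0 \<in> V\<close>])
  hence "eventually (\<lambda>w. (eval_fps g \<circ> \<psi>) w = w) (nhds 0)"
    by eventually_elim (use \<psi>(2) in \<open>auto simp: V_def\<close>)
  moreover have "(eval_fps g \<circ> \<psi>) has_fps_expansion (g oo P)"
    using rg P P0 by (intro has_fps_expansion_compose eval_fps_has_fps_expansion)
  ultimately have "(\<lambda>w. w) has_fps_expansion (g oo P)"
    using has_fps_expansion_cong[of "eval_fps g \<circ> \<psi>" "\<lambda>w. w"] by blast
  hence gP: "g oo P = fps_X" using has_fps_expansion_fps_X fps_expansion_unique_complex by blast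
  have "fps_inv g = (fps_inv g oo g) oo P" using fps_compose_assoc[OF P0 g0, of "fps_inv g"] gP by simp
  also have "\<dots> = P" using fps_inv[OF g0 g1] P0 by simp
  finally show ?thesis using P by (simp add: has_fps_expansion_def)
qed

section \<open>The group of germs\<close>

lemma germG_iff: "x \<in> germG \<longleftrightarrow> fps_conv_radius x > 0 \<and> fps_nth x 0 = 0 \<and> fps_nth x 1 \<noteq> 0"
  by (simp add: germG_def)

lemma germG_nth_0 [simp]: "x \<in> germG \<Longrightarrow> fps_nth x 0 = 0"
  and germG_nth_1: "x \<in> germG \<Longrightarrow> fps_nth x (Suc 0) \<noteq> 0"
  by (simp_all add: germG_iff)

lemma fps_nth_compose_1 [simp]:
  "fps_nth g 0 = 0 \<Longrightarrow> fps_nth (f oo g) (Suc 0) = fps_nth f (Suc 0) * fps_nth g (Suc 0)"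
  by (simp add: fps_compose_nth)

lemma fps_nth_fps_inv_0 [simp]: "fps_nth (fps_inv f) 0 = 0"
  by (simp add: fps_inv_def)

lemma fps_nth_fps_inv_1 [simp]: "fps_nth (fps_inv f) (Suc 0) = 1 / fps_nth f (Suc 0)"
  by (simp add: fps_inv_def)

lemma fps_X_in_germG [simp]: "fps_X \<in> germG"
  by (simp add: germG_iff)

lemma germG_compose [simp]: "x \<in> germG \<Longrightarrow> y \<in> germG \<Longrightarrow> x oo y \<in> germG"
  by (simp add: germG_iff fps_conv_radius_compose_pos)

lemma germG_fps_inv [simp]: "x \<in> germG \<Longrightarrow> fps_inv x \<in> germG"
  by (simp add: germG_iff fps_conv_radius_fps_inv_pos)

\<comment> \<open>compositions of germs are kept in left-associated normal form\<close>
declare fps_compose_assoc [simp]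

lemma fps_inv_compose_self [simp]: "x \<in> germG \<Longrightarrow> fps_inv x oo x = fps_X"
  and fps_compose_fps_inv_self [simp]: "x \<in> germG \<Longrightarrow> x oo fps_inv x = fps_X"
  by (simp_all add: germG_iff fps_inv fps_inv_right)

lemma fps_compose_fps_inv_cancel [simp]:
  assumes "x \<in> germG"
  shows "y oo fps_inv x oo x = y" and "y oo x oo fps_inv x = y"
  using fps_compose_assoc[of x "fps_inv x" y] fps_compose_assoc[of "fps_inv x" x y] assms by simp_all

lemma fps_inv_fps_inv [simp]: "x \<in> germG \<Longrightarrow> fps_inv (fps_inv x) = x"
  by (simp add: germG_iff fps_inv_idempotent)

lemma fps_inv_unique:
  assumes "x \<in> germG" "y \<in> germG" "x oo y = fps_X"
  shows "fps_inv x = y"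
proof -
  have "fps_inv x = fps_inv x oo (x oo y)" by (simp only: assms(3) fps_compose_fps_X)
  also have "\<dots> = y" using assms(1,2) by simp
  finally show ?thesis .
qed

lemma fps_inv_compose: "x \<in> germG \<Longrightarrow> y \<in> germG \<Longrightarrow> fps_inv (x oo y) = fps_inv y oo fps_inv x"
proof (rule fps_inv_unique)
  assume "x \<in> germG" "y \<in> germG"
  thus "x oo y oo (fps_inv y oo fps_inv x) = fps_X" by simp
qed simp_all

lemma fps_inv_fps_X [simp]: "fps_inv fps_X = (fps_X :: complex fps)"
  by (rule fps_inv_unique) simp_all

lemma fps_compose_cancel_left [simp]:
  assumes "x \<in> germG" "y \<in> germG" "z \<in> germG"
  shows "x oo y = x oo z \<longleftrightarrow> y = z"
proof
  assume "x oo y = x oo z"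
  hence "fps_inv x oo (x oo y) = fps_inv x oo (x oo z)" by simp
  thus "y = z" using assms by simp
qed simp

lemma mult_compose: "y \<in> germG \<Longrightarrow> mult (x oo y) = mult x * mult y"
  by (simp add: mult_def)

lemma mult_fps_inv: "mult (fps_inv x) = inverse (mult x)"
  by (simp add: mult_def inverse_eq_divide)

lemma mult_fps_X [simp]: "mult fps_X = 1"
  by (simp add: mult_def)

lemma mult_nonzero: "x \<in> germG \<Longrightarrow> mult x \<noteq> 0"
  by (simp add: mult_def germG_nth_1)

lemma conj_compose:
  assumes "g \<in> germG" "x \<in> germG" "y \<in> germG"
  shows "fps_inv g oo (x oo y) oo g = (fps_inv g oo x oo g) oo (fps_inv g oo y oo g)"
  using assms by simp

lemma conj_eq_iff_commute:
  assumes "g \<in> germG" "x \<in> germG"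
  shows "fps_inv g oo x oo g = x \<longleftrightarrow> x oo g = g oo x"
proof -
  have "g oo (fps_inv g oo x oo g) = x oo g" using assms by simp
  moreover have "fps_inv g oo x oo g \<in> germG" using assms by simp
  ultimately show ?thesis using assms fps_compose_cancel_left[of g] by (metis germG_compose)
qed

lemma gnpow_0 [simp]: "gnpow x 0 = fps_X"
  and gnpow_Suc: "gnpow x (Suc n) = x oo gnpow x n"
  by (simp_all add: gnpow_def)

lemma germG_gnpow [simp]: "x \<in> germG \<Longrightarrow> gnpow x n \<in> germG"
  by (induction n) (simp_all add: gnpow_Suc)

lemma gnpow_add: "x \<in> germG \<Longrightarrow> gnpow x (m + n) = gnpow x m oo gnpow x n"
  by (induction m) (simp_all add: gnpow_Suc)

lemma gnpow_Suc_right: "x \<in> germG \<Longrightarrow> gnpow x (Suc n) = gnpow x n oo x"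
  using gnpow_add[of x n 1] by (simp add: gnpow_Suc)

lemma gipow_int [simp]: "gipow x (int n) = gnpow x n"
  by (simp add: gipow_def)

lemma gipow_neg_int: "gipow x (- int n) = gnpow (fps_inv x) n"
  by (cases n) (simp_all add: gipow_def del: of_nat_Suc)

lemma germG_gipow [simp]: "x \<in> germG \<Longrightarrow> gipow x k \<in> germG"
  by (simp add: gipow_def)

lemma gipow_0 [simp]: "gipow x 0 = fps_X"
  using gipow_int[of x 0] by simp

lemma gipow_1 [simp]: "x \<in> germG \<Longrightarrow> gipow x 1 = x"
  using gipow_int[of x 1] by (simp add: gnpow_Suc)

lemma gipow_succ:
  assumes "x \<in> germG"
  shows "gipow x (k + 1) = gipow x k oo x"
proof (cases k rule: int_cases)
  case (nonneg n)
  thus ?thesis using gnpow_Suc_right[OF assms, of n] by (simp add: gipow_def nat_add_distrib)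
next
  case (neg n)
  have "gipow x (- int (Suc n)) = gnpow (fps_inv x) n oo fps_inv x"
    using assms by (simp only: gipow_neg_int gnpow_Suc_right germG_fps_inv)
  thus ?thesis using neg assms by (simp add: gipow_neg_int)
qed

lemma gipow_pred: "x \<in> germG \<Longrightarrow> gipow x (k - 1) = gipow x k oo fps_inv x"
  using gipow_succ[of x "k - 1"] by simp

lemma gipow_add: "x \<in> germG \<Longrightarrow> gipow x (i + j) = gipow x i oo gipow x j"
proof (induction j rule: int_induct[where k = 0])
  case (step1 j)
  thus ?case using gipow_succ[of x "i + j"] gipow_succ[of x j] by (simp add: add.assoc[symmetric])
next
  case (step2 j)
  thus ?case using gipow_pred[of x "i + j"] gipow_pred[of x j] by (simp add: algebra_simps)
qed simp

lemma gipow_neg: "x \<in> germG \<Longrightarrow> gipow x (- k) = fps_inv (gipow x k)"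
  by (rule fps_inv_unique[symmetric]) (simp_all flip: gipow_add)

lemma gipow_mult: "x \<in> germG \<Longrightarrow> gipow x (i * j) = gipow (gipow x i) j"
proof (induction j rule: int_induct[where k = 0])
  case (step1 j)
  thus ?case by (simp add: algebra_simps gipow_add gipow_succ)
next
  case (step2 j)
  have "gipow x (i * (j - 1)) = gipow x (i * j + - i)" by (simp add: algebra_simps)
  also have "\<dots> = gipow x (i * j) oo gipow x (- i)" using step2 by (simp only: gipow_add)
  finally show ?case using step2 by (simp add: gipow_neg gipow_pred)
qed simp

lemma gipow_conj:
  assumes "g \<in> germG" "x \<in> germG"
  shows "gipow (fps_inv g oo x oo g) k = fps_inv g oo gipow x k oo g"
proof (induction k rule: int_induct[where k = 0])
  case (step1 j)
  thus ?case using assms by (simp add: gipow_succ)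
next
  case (step2 j)
  thus ?case using assms by (simp add: gipow_pred fps_inv_compose)
qed (use assms in simp)

lemma gipow_commute:
  assumes "g \<in> germG" "x \<in> germG" "x oo g = g oo x"
  shows "gipow x k oo g = g oo gipow x k"
proof -
  have "fps_inv g oo x oo g = x" using assms by (simp add: conj_eq_iff_commute)
  hence "fps_inv g oo gipow x k oo g = gipow x k" using gipow_conj[OF assms(1,2), of k] by simp
  thus ?thesis using assms by (simp add: conj_eq_iff_commute)
qed

lemma fps_compose_swap_right:
  assumes "y oo z = z oo y" "y \<in> germG" "z \<in> germG"
  shows "x oo y oo z = x oo z oo y"
  using assms fps_compose_assoc[of z y x] fps_compose_assoc[of y z x] by simp

lemma gipow_compose_distrib:
  assumes a: "a \<in> germG" and b: "b \<in> germG" and ab: "a oo b = b oo a"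
  shows "gipow (a oo b) k = gipow a k oo gipow b k"
proof (induction k rule: int_induct[where k = 0])
  case (step1 j)
  have "gipow (a oo b) (j + 1) = gipow a j oo gipow b j oo a oo b"
    using step1 a b by (simp add: gipow_succ)
  also have "\<dots> = gipow a j oo a oo gipow b j oo b"
    using gipow_commute[OF a b ab[symmetric], of j] a b by (simp add: fps_compose_swap_right)
  also have "\<dots> = gipow a (j + 1) oo gipow b (j + 1)" using a b by (simp add: gipow_succ)
  finally show ?case .
next
  case (step2 j)
  have "fps_inv a oo b = b oo fps_inv a"
    using gipow_commute[OF b a ab, of "-1"] a by (simp add: gipow_neg)
  hence c: "gipow b j oo fps_inv a = fps_inv a oo gipow b j"
    using gipow_commute[OF germG_fps_inv[OF a] b, of j] a b by simp
  have "gipow (a oo b) (j - 1) = gipow a j oo gipow b j oo fps_inv b oo fps_inv a"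
    using step2 a b by (simp add: gipow_pred fps_inv_compose)
  also have "\<dots> = gipow a j oo gipow b j oo fps_inv a oo fps_inv b"
    using ab a b by (simp add: fps_compose_swap_right fps_inv_compose[symmetric])
  also have "\<dots> = gipow a j oo fps_inv a oo gipow b j oo fps_inv b"
    using c a b by (simp add: fps_compose_swap_right)
  also have "\<dots> = gipow a (j - 1) oo gipow b (j - 1)" using a b by (simp add: gipow_pred)
  finally show ?case .
qed simp

lemma mult_gipow: "x \<in> germG \<Longrightarrow> mult (gipow x k) = mult x powi k"
proof (induction k rule: int_induct[where k = 0])
  case (step1 j)
  thus ?case using mult_nonzero[of x] by (simp add: gipow_succ mult_compose power_int_add)
next
  case (step2 j)
  thus ?case using mult_nonzero[of x] by (simp add: gipow_pred mult_compose mult_fps_inv power_int_diff divide_inverse)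
qed simp

lemma gnpow_fps_X [simp]: "gnpow fps_X n = fps_X"
  by (induction n) (simp_all add: gnpow_Suc)

lemma gipow_fps_X [simp]: "gipow fps_X k = fps_X"
  by (simp add: gipow_def)

lemma gnpow_two: "x \<in> germG \<Longrightarrow> gnpow x 2 = x oo x"
  by (simp add: numeral_2_eq_2 gnpow_Suc)

lemma gord_eqI:
  assumes "0 < k" and "\<And>n. gnpow g n = fps_X \<longleftrightarrow> k dvd n"
  shows "gord g = k"
proof -
  have "(LEAST n. 0 < n \<and> gnpow g n = fps_X) = k"
    using assms by (intro Least_equality) (auto dest: dvd_imp_le)
  thus ?thesis using assms unfolding gord_def by auto
qed

lemma dvd_mult_iff_div_gcd_dvd:
  fixes q k m :: nat
  assumes "0 < q"
  shows "q dvd k * m \<longleftrightarrow> q div gcd k q dvd m"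
proof -
  define g where "g = gcd k q"
  have g: "0 < g" using assms by (simp add: g_def)
  have cop: "coprime (k div g) (q div g)" using assms unfolding g_def by (intro div_gcd_coprime) auto
  have "g * (q div g) = q" "g * (k div g) = k" by (simp_all add: g_def)
  hence "q dvd k * m \<longleftrightarrow> g * (q div g) dvd g * (k div g * m)" by (simp add: mult.assoc[symmetric])
  also have "\<dots> \<longleftrightarrow> q div g dvd k div g * m" using g by simp
  also have "\<dots> \<longleftrightarrow> q div g dvd m" using cop by (simp add: coprime_dvd_mult_right_iff coprime_commute)
  finally show ?thesis by (simp add: g_def)
qed

section \<open>Series tangent to the identity\<close>

definition tangent_to_id :: "nat \<Rightarrow> 'a::comm_ring_1 fps \<Rightarrow> bool" where
  "tangent_to_id p f \<longleftrightarrow>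
     fps_nth f 0 = 0 \<and> fps_nth f 1 = 1 \<and> (\<forall>k. 2 \<le> k \<and> k \<le> p \<longrightarrow> fps_nth f k = 0)"

lemma sum_atLeastAtMost_single:
  fixes h :: "nat \<Rightarrow> 'a::comm_monoid_add"
  assumes "\<And>j. j \<le> n \<Longrightarrow> j \<noteq> a \<Longrightarrow> h j = 0"
  shows "(\<Sum>j=0..n. h j) = (if a \<le> n then h a else 0)"
proof -
  have "(\<Sum>j=0..n. h j) = (\<Sum>j=0..n. if j = a then h j else 0)"
    using assms by (intro sum.cong) auto
  thus ?thesis by (simp add: sum.delta')
qed

lemma tangent_to_id_power_nth:
  fixes f :: "'a::comm_ring_1 fps"
  assumes f: "tangent_to_id p f" and p: "0 < p" and n: "n \<le> Suc p"
  shows "fps_nth (f ^ i) n =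
           (if n = i then 1 else 0) + (if i = 1 \<and> n = Suc p then fps_nth f (Suc p) else 0)"
  using n
proof (induction i arbitrary: n)
  case 0 thus ?case using p by simp
next
  case (Suc i)
  show ?case
  proof (cases i)
    case 0
    thus ?thesis using f p Suc.prems unfolding tangent_to_id_def
      by (cases "n = 0"; cases "n = 1"; cases "n = Suc p") auto
  next
    case (Suc i')
    have fi0: "fps_nth (f ^ i) 0 = 0" using Suc f by (simp add: tangent_to_id_def startsby_zero_power)
    have "fps_nth (f ^ Suc i) n = (\<Sum>j=0..n. fps_nth f j * fps_nth (f ^ i) (n - j))"
      by (simp add: fps_mult_nth)
    also have "\<dots> = (if 1 \<le> n then fps_nth f 1 * fps_nth (f ^ i) (n - 1) else 0)"
    proof (rule sum_atLeastAtMost_single)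
      fix j assume j: "j \<le> n" "j \<noteq> 1"
      show "fps_nth f j * fps_nth (f ^ i) (n - j) = 0"
      proof (cases "j \<le> p")
        case True thus ?thesis using j f by (cases "j = 0") (auto simp: tangent_to_id_def)
      next
        case False thus ?thesis using j Suc.prems fi0 by auto
      qed
    qed
    also have "\<dots> = (if n = Suc i then 1 else 0)"
      using Suc.IH[of "n - 1"] Suc.prems f \<open>i = Suc i'\<close> fi0 by (auto simp: tangent_to_id_def)
    finally show ?thesis using \<open>i = Suc i'\<close> by simp
  qed
qed

lemma fps_compose_tangent_to_id_nth:
  fixes f x :: "'a::comm_ring_1 fps"
  assumes f: "tangent_to_id p f" and p: "0 < p"
  shows "n \<le> p \<Longrightarrow> fps_nth (x oo f) n = fps_nth x n"
    and "fps_nth (x oo f) (Suc p) = fps_nth x (Suc p) + fps_nth x 1 * fps_nth f (Suc p)"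
proof -
  have *: "fps_nth (x oo f) n = fps_nth x n + (if n = Suc p then fps_nth x 1 * fps_nth f (Suc p) else 0)"
    if n: "n \<le> Suc p" for n
  proof -
    have "fps_nth (x oo f) n = (\<Sum>i=0..n. fps_nth x i * fps_nth (f ^ i) n)"
      by (rule fps_compose_nth)
    also have "\<dots> = (\<Sum>i=0..n. (if i = n then fps_nth x i else 0)
                   + (if i = 1 then (if n = Suc p then fps_nth x i * fps_nth f (Suc p) else 0) else 0))"
      using tangent_to_id_power_nth[OF f p n] by (intro sum.cong) (auto simp: algebra_simps)
    also have "\<dots> = fps_nth x n + (if n = Suc p then fps_nth x 1 * fps_nth f (Suc p) else 0)"
      using p by (simp add: sum.distrib sum.delta')
    finally show ?thesis .
  qed
  show "n \<le> p \<Longrightarrow> fps_nth (x oo f) n = fps_nth x n" using *[of n] by simp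
  show "fps_nth (x oo f) (Suc p) = fps_nth x (Suc p) + fps_nth x 1 * fps_nth f (Suc p)"
    using *[of "Suc p"] by simp
qed

lemma tangent_to_id_compose_nth:
  fixes f x :: "'a::comm_ring_1 fps"
  assumes f: "tangent_to_id p f" and p: "0 < p" and x0: "fps_nth x 0 = 0"
  shows "n \<le> p \<Longrightarrow> fps_nth (f oo x) n = fps_nth x n"
    and "fps_nth (f oo x) (Suc p) = fps_nth x (Suc p) + fps_nth f (Suc p) * fps_nth x 1 ^ Suc p"
proof -
  have *: "fps_nth (f oo x) n
        = fps_nth x n + (if n = Suc p then fps_nth f (Suc p) * fps_nth x 1 ^ Suc p else 0)"
    if n: "n \<le> Suc p" for n
  proof -
    have "fps_nth (f oo x) n = (\<Sum>i=0..n. fps_nth f i * fps_nth (x ^ i) n)"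
      by (rule fps_compose_nth)
    also have "\<dots> = (\<Sum>i=0..n. (if i = 1 then fps_nth (x ^ i) n else 0)
                   + (if i = Suc p then fps_nth f (Suc p) * fps_nth (x ^ i) n else 0))"
    proof (intro sum.cong refl)
      fix i assume "i \<in> {0..n}"
      thus "fps_nth f i * fps_nth (x ^ i) n = (if i = 1 then fps_nth (x ^ i) n else 0)
              + (if i = Suc p then fps_nth f (Suc p) * fps_nth (x ^ i) n else 0)"
        using f p n by (cases "i = 0") (auto simp: tangent_to_id_def)
    qed
    also have "\<dots> = fps_nth x n + (if n = Suc p then fps_nth f (Suc p) * fps_nth x 1 ^ Suc p else 0)"
      using p n startsby_zero_power_nth_same[OF x0, of "Suc p"]
      by (cases "n = 0") (auto simp: sum.distrib sum.delta' x0)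
    finally show ?thesis .
  qed
  show "n \<le> p \<Longrightarrow> fps_nth (f oo x) n = fps_nth x n" using *[of n] by simp
  show "fps_nth (f oo x) (Suc p) = fps_nth x (Suc p) + fps_nth f (Suc p) * fps_nth x 1 ^ Suc p"
    using *[of "Suc p"] by simp
qed

lemma power_eq_if_mult_power_Suc_eq:
  fixes a b c :: "'a::field"
  assumes "c \<noteq> 0" "a \<noteq> 0" "a * c ^ Suc p = b * c * a"
  shows "c ^ p = b"
proof -
  have "(c * a) * c ^ p = (c * a) * b" using assms(3) by (simp only: power_Suc ac_simps)
  thus ?thesis using assms(1,2) by (subst (asm) mult_left_cancel) simp_all
qed

section \<open>Roots of unity\<close>

definition prim_root :: "nat \<Rightarrow> complex" where
  "prim_root n = exp (2 * pi * \<i> / of_nat n)"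

lemma prim_root_power: "prim_root n ^ k = exp (2 * pi * \<i> * of_nat k / of_nat n)"
proof -
  have "prim_root n ^ k = exp (of_nat k * (2 * pi * \<i> / of_nat n))"
    unfolding prim_root_def by (simp only: exp_of_nat_mult)
  thus ?thesis by (simp add: mult_ac)
qed

lemma prim_root_power_eq_1_iff: "0 < n \<Longrightarrow> prim_root n ^ k = 1 \<longleftrightarrow> n dvd k"
  using complex_root_unity_eq_1[of n k] by (simp add: prim_root_power)

lemma prim_root_mult_power: "0 < k \<Longrightarrow> prim_root (m * k) ^ k = prim_root m"
  unfolding prim_root_power by (simp add: prim_root_def)

lemma prim_root_double_power_half: "0 < p \<Longrightarrow> prim_root (2 * p) ^ p = -1"
  by (simp add: prim_root_power)

lemma root_of_unity_eq_power:
  assumes "0 < n" "z ^ n = 1"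
  shows "\<exists>k<n. z = prim_root n ^ k"
proof -
  obtain k where "k < n" "z = exp (2 * of_real pi * \<i> * of_nat k / of_nat n)"
    using complex_roots_unity[of n] assms by auto
  thus ?thesis by (auto simp: prim_root_power)
qed

lemma least_exponent_in_submonoid_dvd:
  fixes \<zeta> :: complex and M :: "complex set"
  assumes \<zeta>n: "\<zeta> ^ n = 1" and n: "0 < n"
    and one: "1 \<in> M" and mult: "\<And>x y. x \<in> M \<Longrightarrow> y \<in> M \<Longrightarrow> x * y \<in> M"
    and k: "\<zeta> ^ k \<in> M" and e: "0 < e" "\<zeta> ^ e \<in> M" "\<And>j. 0 < j \<Longrightarrow> \<zeta> ^ j \<in> M \<Longrightarrow> e \<le> j"
  shows "e dvd k"
proof (rule ccontr)
  have pow: "x ^ j \<in> M" if "x \<in> M" for x j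
    using that one mult by (induction j) auto
  assume "\<not> e dvd k"
  hence r: "0 < k mod e" "k mod e < e" using e(1) by (auto simp: mod_greater_zero_iff_not_dvd)
  \<comment> \<open>as \<open>\<zeta>\<^sup>n = 1\<close>, the exponent \<open>k mod e\<close> may be replaced by \<open>k\<close> plus a multiple of \<open>e\<close>\<close>
  have "k mod e + e * (k div e) * n = k + e * ((k div e) * (n - 1))"
    using n div_mult_mod_eq[of k e] by (cases n) (simp_all add: algebra_simps)
  hence "\<zeta> ^ (k mod e) = \<zeta> ^ k * (\<zeta> ^ e) ^ ((k div e) * (n - 1))"
    using \<zeta>n by (metis (no_types) power_add power_mult mult.commute mult_1_right power_one)
  hence "\<zeta> ^ (k mod e) \<in> M" using k e(2) by (simp add: mult pow)
  thus False using e(3)[OF r(1)] r(2) by simp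
qed

lemma subgroup_of_roots_of_unity:
  fixes M :: "complex set"
  assumes n: "0 < n" and one: "1 \<in> M" and mult: "\<And>x y. x \<in> M \<Longrightarrow> y \<in> M \<Longrightarrow> x * y \<in> M"
    and roots: "\<And>x. x \<in> M \<Longrightarrow> x ^ n = 1"
  shows "card M dvd n" and "M = {z. z ^ card M = 1}"
proof -
  define \<zeta> where "\<zeta> = prim_root n"
  have pow: "x ^ k \<in> M" if "x \<in> M" for x k
    using that one mult by (induction k) auto
  have \<zeta>n: "\<zeta> ^ n = 1" using prim_root_power_eq_1_iff[OF n] by (simp add: \<zeta>_def)
  define e where "e = (LEAST k. 0 < k \<and> \<zeta> ^ k \<in> M)"
  have e: "0 < e" "\<zeta> ^ e \<in> M"
    using n \<zeta>n one LeastI[of "\<lambda>k. 0 < k \<and> \<zeta> ^ k \<in> M" n] by (auto simp: e_def)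
  have e_dvd: "e dvd k" if "\<zeta> ^ k \<in> M" for k
    using least_exponent_in_submonoid_dvd[OF \<zeta>n n one mult that e] unfolding e_def
    by (simp add: Least_le)
  define q where "q = n div e"
  have nq: "n = q * e" using e_dvd \<zeta>n one by (simp add: q_def)
  hence q: "0 < q" using n by (cases q) auto
  have \<zeta>e: "\<zeta> ^ e = prim_root q"
    unfolding \<zeta>_def nq by (rule prim_root_mult_power[OF e(1)])
  have M: "M = {z. z ^ q = 1}"
  proof safe
    fix z assume z: "z \<in> M"
    then obtain k where "z = \<zeta> ^ k" using root_of_unity_eq_power[OF n roots[OF z]] \<zeta>_def by blast
    moreover from this obtain m where "k = e * m" using z e_dvd by blast
    ultimately have "z ^ q = (\<zeta> ^ n) ^ m" by (simp add: nq power_mult[symmetric] mult_ac)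
    thus "z ^ q = 1" using \<zeta>n by simp
  next
    fix z :: complex assume "z ^ q = 1"
    then obtain j where "z = (\<zeta> ^ e) ^ j" using root_of_unity_eq_power[OF q] \<zeta>e by metis
    thus "z \<in> M" using e(2) by (simp add: pow)
  qed
  have "card M = q" using card_roots_unity_eq[OF q] M by simp
  thus "card M dvd n" and "M = {z. z ^ card M = 1}" using nq M by simp_all
qed

lemma square_of_root_of_minus_one:
  fixes u :: complex
  assumes q: "0 < q" "q dvd p" and u: "u ^ p = -1" and u2: "(u ^ 2) ^ q = 1"
  shows "odd (p div q) \<and> (\<exists>a. odd a \<and> u ^ 2 = prim_root q ^ a)"
proof -
  have "p \<noteq> 0" using u by (intro notI) simp
  define \<xi> where "\<xi> = prim_root (2 * p)"
  define e where "e = p div q"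
  have pe: "p = q * e" using q by (simp add: e_def)
  have "u ^ (2 * p) = 1" using u by (simp add: power_mult mult.commute[of 2])
  then obtain s where s: "u = \<xi> ^ s" using root_of_unity_eq_power[of "2 * p" u] \<open>p \<noteq> 0\<close> \<xi>_def by auto
  have \<xi>p: "\<xi> ^ p = -1" using \<open>p \<noteq> 0\<close> by (simp add: \<xi>_def prim_root_double_power_half)
  have "odd s"
  proof
    assume "even s"
    then obtain t where "s = 2 * t" by blast
    hence "u ^ p = (\<xi> ^ p) ^ (2 * t)" using s by (simp add: power_mult[symmetric] mult_ac)
    thus False using u \<xi>p by (simp add: power_mult)
  qed
  have "\<xi> ^ (2 * s * q) = 1" using u2 s by (simp add: power_mult[symmetric] mult_ac)
  hence "2 * p dvd 2 * s * q" using \<open>p \<noteq> 0\<close> by (simp add: \<xi>_def prim_root_power_eq_1_iff)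
  hence "e dvd s" using q pe by (simp add: mult.commute[of s])
  then obtain a where a: "s = e * a" by blast
  have "\<xi> ^ (2 * e) = prim_root q"
    using prim_root_mult_power[of "2 * e" q] pe \<open>p \<noteq> 0\<close> unfolding \<xi>_def by (simp add: mult_ac)
  moreover have "u ^ 2 = (\<xi> ^ (2 * e)) ^ a" using s a by (simp add: power_mult[symmetric] mult_ac)
  ultimately have "u ^ 2 = prim_root q ^ a" by simp
  moreover have "odd e" "odd a" using \<open>odd s\<close> a by simp_all
  ultimately show ?thesis by (auto simp: e_def)
qed

section \<open>Reversible germs in \<open>A\<^sub>p\<close>\<close>

locale reversible_germ =
  fixes p d :: nat and f h :: "complex fps"
  assumes f_in_Ap: "f \<in> germAp p"
    and f_reversible: "reversible f"
    and h_in_C1: "h \<in> centraliser f germG1"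
    and C1_eq_range: "centraliser f germG1 = range (gipow h)"
    and d_pos: "0 < d"
    and h_power_d: "gnpow h d = f"
begin

abbreviation Cf :: "complex fps set" where "Cf \<equiv> centraliser f germG"
abbreviation Tf :: "complex fps set" where "Tf \<equiv> torsion Cf"
abbreviation Rf :: "complex fps set" where "Rf \<equiv> reversers f"

lemma p_pos: "0 < p"
  and f_tangent: "tangent_to_id p f"
  and f_coeff_nonzero: "fps_nth f (Suc p) \<noteq> 0"
  and f_in_G: "f \<in> germG"
proof -
  have f1: "f \<in> germGp p" and "f \<notin> germGp (Suc p)" using f_in_Ap by (auto simp: germAp_def)
  then obtain k where k: "2 \<le> k" "k \<le> Suc p" "fps_nth f k \<noteq> 0" by (auto simp: germGp_def)
  moreover have "\<not> k \<le> p" using k f1 by (auto simp: germGp_def)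
  ultimately have "k = Suc p" by simp
  thus "0 < p" "fps_nth f (Suc p) \<noteq> 0" using k by auto
  from f1 have "f \<in> germG" "fps_nth f 1 = 1" "\<forall>k. 2 \<le> k \<and> k \<le> p \<longrightarrow> fps_nth f k = 0"
    by (simp_all add: germGp_def germG1_def)
  thus "tangent_to_id p f" "f \<in> germG" by (simp_all add: tangent_to_id_def)
qed

lemma Cf_iff: "x \<in> Cf \<longleftrightarrow> x \<in> germG \<and> x oo f = f oo x"
  by (simp add: centraliser_def)

lemma Cf_germG: "x \<in> Cf \<Longrightarrow> x \<in> germG"
  by (simp add: Cf_iff)

lemma fps_X_in_Cf: "fps_X \<in> Cf"
  using f_in_G by (simp add: Cf_iff)

lemma Cf_compose: "x \<in> Cf \<Longrightarrow> y \<in> Cf \<Longrightarrow> x oo y \<in> Cf"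
  using fps_compose_swap_right[of y f x] f_in_G by (simp add: Cf_iff)

lemma Cf_gipow: "x \<in> Cf \<Longrightarrow> gipow x k \<in> Cf"
  using gipow_commute[of f x k] f_in_G by (simp add: Cf_iff)

lemma Cf_fps_inv: "x \<in> Cf \<Longrightarrow> fps_inv x \<in> Cf"
  using Cf_gipow[of x "-1"] by (simp add: gipow_neg Cf_germG)

lemma Cf_mult_1_eq_gipow_h: "x \<in> Cf \<Longrightarrow> mult x = 1 \<Longrightarrow> \<exists>k. x = gipow h k"
  using C1_eq_range by (auto simp: centraliser_def germG1_def mult_def)

lemma h_in_Cf: "h \<in> Cf" and mult_h: "mult h = 1"
  using h_in_C1 by (auto simp: centraliser_def germG1_def mult_def)

lemma h_in_G: "h \<in> germG"
  using h_in_Cf by (rule Cf_germG)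

lemma f_eq_gipow_h: "f = gipow h (int d)"
  using h_power_d by simp

lemma Rf_iff: "g \<in> Rf \<longleftrightarrow> g \<in> germG \<and> fps_inv g oo f oo g = fps_inv f"
  by (simp add: reversers_def)

lemma Rf_germG: "g \<in> Rf \<Longrightarrow> g \<in> germG"
  by (simp add: Rf_iff)

lemma Rf_compose_eq: "g \<in> Rf \<Longrightarrow> f oo g = g oo fps_inv f"
proof -
  assume g: "g \<in> Rf"
  have "f oo g = g oo (fps_inv g oo f oo g)" using Rf_germG[OF g] f_in_G by simp
  also have "\<dots> = g oo fps_inv f" using g by (simp only: Rf_iff)
  finally show ?thesis .
qed

lemma mult_power_p_Cf: "x \<in> Cf \<Longrightarrow> mult x ^ p = 1"
proof -
  assume x: "x \<in> Cf"
  hence x0: "fps_nth x 0 = 0" and x1: "mult x \<noteq> 0" by (simp_all add: Cf_iff mult_nonzero)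
  have "x oo f = f oo x" using x by (simp add: Cf_iff)
  hence "fps_nth (x oo f) (Suc p) = fps_nth (f oo x) (Suc p)" by (rule arg_cong)
  hence "fps_nth x (Suc p) + mult x * fps_nth f (Suc p)
       = fps_nth x (Suc p) + fps_nth f (Suc p) * mult x ^ Suc p"
    by (simp only: fps_compose_tangent_to_id_nth(2)[OF f_tangent p_pos]
        tangent_to_id_compose_nth(2)[OF f_tangent p_pos x0] mult_def)
  hence "fps_nth f (Suc p) * mult x ^ Suc p = 1 * mult x * fps_nth f (Suc p)"
    by (simp only: add_left_cancel mult_1_left)
  thus ?thesis by (rule power_eq_if_mult_power_Suc_eq[OF x1 f_coeff_nonzero])
qed

lemma fps_inv_f_tangent: "tangent_to_id p (fps_inv f)"
  and fps_inv_f_coeff: "fps_nth (fps_inv f) (Suc p) = - fps_nth f (Suc p)"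
proof -
  have e: "f oo fps_inv f = fps_X" using f_in_G by simp
  have inv1: "fps_nth (fps_inv f) 1 = 1" using f_tangent by (simp add: tangent_to_id_def)
  have "fps_nth (fps_inv f) n = fps_nth fps_X n" if "n \<le> p" for n
    using tangent_to_id_compose_nth(1)[OF f_tangent p_pos _ that, of "fps_inv f"] e by simp
  thus "tangent_to_id p (fps_inv f)" using inv1 by (auto simp: tangent_to_id_def)
  have "fps_nth fps_X (Suc p) = fps_nth (fps_inv f) (Suc p) + fps_nth f (Suc p) * 1 ^ Suc p"
    using tangent_to_id_compose_nth(2)[OF f_tangent p_pos, of "fps_inv f"] e inv1 by simp
  hence "fps_nth (fps_inv f) (Suc p) + fps_nth f (Suc p) = 0" using p_pos by simp
  thus "fps_nth (fps_inv f) (Suc p) = - fps_nth f (Suc p)" by (simp only: add_eq_0_iff2)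
qed

lemma mult_power_p_Rf: "g \<in> Rf \<Longrightarrow> mult g ^ p = -1"
proof -
  assume g: "g \<in> Rf"
  hence g0: "fps_nth g 0 = 0" and g1: "mult g \<noteq> 0" by (simp_all add: Rf_iff mult_nonzero)
  have "fps_nth (f oo g) (Suc p) = fps_nth (g oo fps_inv f) (Suc p)"
    using Rf_compose_eq[OF g] by (rule arg_cong)
  hence "fps_nth g (Suc p) + fps_nth f (Suc p) * mult g ^ Suc p
       = fps_nth g (Suc p) + mult g * - fps_nth f (Suc p)"
    by (simp only: tangent_to_id_compose_nth(2)[OF f_tangent p_pos g0]
        fps_compose_tangent_to_id_nth(2)[OF fps_inv_f_tangent p_pos] fps_inv_f_coeff mult_def)
  hence "fps_nth f (Suc p) * mult g ^ Suc p = - 1 * mult g * fps_nth f (Suc p)"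
    by (simp only: add_left_cancel mult_minus_right mult_minus_left mult_1_left)
  thus ?thesis by (rule power_eq_if_mult_power_Suc_eq[OF g1 f_coeff_nonzero])
qed

lemma fps_nth_gnpow_f:
  "tangent_to_id p (gnpow f n) \<and> fps_nth (gnpow f n) (Suc p) = of_nat n * fps_nth f (Suc p)"
proof (induction n)
  case 0 thus ?case using p_pos by (auto simp: tangent_to_id_def)
next
  case (Suc n)
  have e: "gnpow f (Suc n) = gnpow f n oo f" using f_in_G by (rule gnpow_Suc_right)
  have low: "fps_nth (gnpow f (Suc n)) k = fps_nth (gnpow f n) k" if "k \<le> p" for k
    using fps_compose_tangent_to_id_nth(1)[OF f_tangent p_pos that] e by simp
  moreover have "fps_nth (gnpow f (Suc n)) (Suc p) = fps_nth (gnpow f n) (Suc p) + fps_nth f (Suc p)"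
    using fps_compose_tangent_to_id_nth(2)[OF f_tangent p_pos, of "gnpow f n"] e Suc.IH
    by (simp add: tangent_to_id_def)
  ultimately show ?case using Suc.IH low[of 0] low[of 1] p_pos by (auto simp: tangent_to_id_def algebra_simps)
qed

lemma gipow_f_eq_fps_X_iff: "gipow f k = fps_X \<longleftrightarrow> k = 0"
proof
  have gnpow_f: "n = 0" if "gnpow f n = fps_X" for n
    using fps_nth_gnpow_f[of n] that p_pos f_coeff_nonzero by simp
  assume k: "gipow f k = fps_X"
  hence "gipow f \<bar>k\<bar> = fps_X" using f_in_G by (cases "k \<ge> 0") (simp_all add: gipow_neg)
  hence "gnpow f (nat \<bar>k\<bar>) = fps_X" by (simp add: gipow_def)
  thus "k = 0" using gnpow_f[of "nat \<bar>k\<bar>"] by simp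
qed simp

lemma gipow_h_eq_fps_X_iff: "gipow h k = fps_X \<longleftrightarrow> k = 0"
proof
  assume hk: "gipow h k = fps_X"
  have "gipow f k = gipow h (int d * k)" using h_in_G by (simp add: f_eq_gipow_h gipow_mult)
  also have "\<dots> = gipow (gipow h k) (int d)" using h_in_G by (simp add: mult.commute gipow_mult)
  finally show "k = 0" using hk gipow_f_eq_fps_X_iff by simp
qed simp

lemma gipow_h_eq_iff: "gipow h i = gipow h j \<longleftrightarrow> i = j"
proof
  assume e: "gipow h i = gipow h j"
  have "gipow h (i - j) = gipow h i oo gipow h (- j)" using gipow_add[OF h_in_G, of i "- j"] by simp
  also have "\<dots> = fps_X" using e h_in_G by (simp add: gipow_neg)
  finally show "i = j" using gipow_h_eq_fps_X_iff by simp
qed simp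

lemma Cf_mult_1_root_unique:
  assumes "y \<in> Cf" "mult y = 1" "gipow y (int d) = gipow h (int d * k)"
  shows "y = gipow h k"
proof -
  obtain j where j: "y = gipow h j" using Cf_mult_1_eq_gipow_h assms(1,2) by blast
  have "gipow h (j * int d) = gipow h (int d * k)" using assms(3) h_in_G by (simp add: j gipow_mult)
  hence "j * int d = int d * k" by (simp only: gipow_h_eq_iff)
  hence "j = k" using d_pos by simp
  thus ?thesis using j by simp
qed

lemma Cf_conj_f: "x \<in> Cf \<Longrightarrow> fps_inv x oo f oo x = f"
  using f_in_G by (simp add: Cf_iff conj_eq_iff_commute)

lemma h_central: "x \<in> Cf \<Longrightarrow> x oo h = h oo x"
proof -
  assume x: "x \<in> Cf"
  hence xG: "x \<in> germG" by (rule Cf_germG)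
  define y where "y = fps_inv x oo h oo x"
  have "y \<in> Cf" unfolding y_def using x h_in_Cf by (intro Cf_compose Cf_fps_inv)
  moreover have "mult y = 1"
    unfolding y_def using xG h_in_G mult_nonzero[OF xG] by (simp add: mult_compose mult_fps_inv mult_h)
  moreover have "gipow y (int d) = gipow h (int d * 1)"
    using gipow_conj[OF xG h_in_G, of "int d"] Cf_conj_f[OF x] h_power_d by (simp add: y_def)
  ultimately have "y = gipow h 1" by (rule Cf_mult_1_root_unique)
  thus ?thesis using xG h_in_G by (simp add: y_def conj_eq_iff_commute)
qed

lemma Rf_conj_f: "g \<in> Rf \<Longrightarrow> fps_inv g oo f oo g = fps_inv f"
  by (simp add: Rf_iff)

lemma Rf_conj_Cf: "g \<in> Rf \<Longrightarrow> x \<in> Cf \<Longrightarrow> fps_inv g oo x oo g \<in> Cf"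
proof -
  assume g: "g \<in> Rf" and x: "x \<in> Cf"
  have gG: "g \<in> germG" and xG: "x \<in> germG" using g x by (simp_all add: Rf_germG Cf_germG)
  define y where "y = fps_inv g oo x oo g"
  have yG: "y \<in> germG" using gG xG by (simp add: y_def)
  have "y oo fps_inv f = fps_inv g oo (x oo f) oo g"
    using conj_compose[OF gG xG f_in_G] Rf_conj_f[OF g] by (simp add: y_def)
  also have "\<dots> = fps_inv g oo (f oo x) oo g" using x by (simp add: Cf_iff)
  also have "\<dots> = fps_inv f oo y"
    using conj_compose[OF gG f_in_G xG] Rf_conj_f[OF g] by (simp add: y_def)
  finally have "y oo fps_inv f = fps_inv f oo y" .
  hence "gipow (fps_inv f) (-1) oo y = y oo gipow (fps_inv f) (-1)"
    using gipow_commute[OF yG germG_fps_inv[OF f_in_G]] by metis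
  hence "f oo y = y oo f" using f_in_G by (simp add: gipow_neg)
  thus ?thesis using yG by (simp add: Cf_iff y_def)
qed

lemma Rf_conj_h: "g \<in> Rf \<Longrightarrow> fps_inv g oo h oo g = fps_inv h"
proof -
  assume g: "g \<in> Rf"
  hence gG: "g \<in> germG" by (rule Rf_germG)
  define y where "y = fps_inv g oo h oo g"
  have "y \<in> Cf" unfolding y_def by (rule Rf_conj_Cf[OF g h_in_Cf])
  moreover have "mult y = 1"
    unfolding y_def using gG h_in_G mult_nonzero[OF gG] by (simp add: mult_compose mult_fps_inv mult_h)
  moreover have "gipow y (int d) = gipow h (int d * -1)"
  proof -
    have "gipow y (int d) = fps_inv f"
      using gipow_conj[OF gG h_in_G, of "int d"] Rf_conj_f[OF g] h_power_d by (simp add: y_def)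
    also have "\<dots> = gipow h (int d * -1)" using h_in_G by (simp add: f_eq_gipow_h gipow_neg)
    finally show ?thesis .
  qed
  ultimately have "y = gipow h (-1)" by (rule Cf_mult_1_root_unique)
  thus ?thesis using h_in_G by (simp add: y_def gipow_neg)
qed

lemma Rf_conj_gipow_h: "g \<in> Rf \<Longrightarrow> fps_inv g oo gipow h r oo g = fps_inv (gipow h r)"
proof -
  assume g: "g \<in> Rf"
  have "fps_inv g oo gipow h r oo g = gipow (gipow h (-1)) r"
    using gipow_conj[OF Rf_germG[OF g] h_in_G, of r] Rf_conj_h[OF g] h_in_G by (simp add: gipow_neg)
  also have "\<dots> = gipow h (- r)" using gipow_mult[OF h_in_G, of "-1" r] by simp
  also have "\<dots> = fps_inv (gipow h r)" using h_in_G by (simp add: gipow_neg)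
  finally show ?thesis .
qed

lemma Tf_iff: "t \<in> Tf \<longleftrightarrow> t \<in> Cf \<and> (\<exists>n>0. gnpow t n = fps_X)"
  by (simp add: torsion_def)

lemma Tf_Cf: "t \<in> Tf \<Longrightarrow> t \<in> Cf"
  by (simp add: Tf_iff)

lemma fps_X_in_Tf: "fps_X \<in> Tf"
  using fps_X_in_Cf by (auto simp: Tf_iff intro: exI[of _ 1])

lemma Tf_gipow: "t \<in> Tf \<Longrightarrow> gipow t k \<in> Tf"
proof -
  assume t: "t \<in> Tf"
  then obtain n where n: "n > 0" "gnpow t n = fps_X" unfolding Tf_iff by blast
  have tG: "t \<in> germG" using t by (simp add: Tf_iff Cf_germG)
  have "gnpow (gipow t k) n = gipow (gipow t (int n)) k"
    using tG by (simp flip: gipow_int gipow_mult add: mult.commute)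
  hence "gnpow (gipow t k) n = fps_X" using n by simp
  thus ?thesis using t n(1) by (auto simp: Tf_iff Cf_gipow)
qed

lemma mult_inj_on_Tf: "inj_on mult Tf"
proof
  fix x y assume x: "x \<in> Tf" and y: "y \<in> Tf" and xy: "mult x = mult y"
  have xG: "x \<in> germG" and yG: "y \<in> germG" using x y by (simp_all add: Tf_iff Cf_germG)
  have "fps_inv y oo x \<in> Cf" using x y by (intro Cf_compose Cf_fps_inv Tf_Cf)
  moreover have "mult (fps_inv y oo x) = 1" using xy xG mult_nonzero[OF yG] by (simp add: mult_compose mult_fps_inv)
  ultimately obtain k where k: "fps_inv y oo x = gipow h k" using Cf_mult_1_eq_gipow_h by blast
  have "x = y oo (fps_inv y oo x)" using xG yG by simp
  hence xk: "x = y oo gipow h k" by (simp only: k)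
  obtain m where m: "m > 0" "gnpow x m = fps_X" using x unfolding Tf_iff by blast
  obtain n where n: "n > 0" "gnpow y n = fps_X" using y unfolding Tf_iff by blast
  have comm: "y oo gipow h k = gipow h k oo y"
    using gipow_commute[OF yG h_in_G h_central[OF Tf_Cf[OF y], symmetric]] by (rule sym)
  have "fps_X = gipow x (int (m * n))" using m xG by (simp add: gipow_mult)
  also have "\<dots> = gipow y (int (n * m)) oo gipow (gipow h k) (int (m * n))"
    using xk gipow_compose_distrib[OF yG germG_gipow[OF h_in_G] comm] by (simp add: mult.commute)
  also have "\<dots> = gipow h (k * int (m * n))" using n yG h_in_G by (simp add: gipow_mult)
  finally have "gipow h (k * int (m * n)) = fps_X" by (rule sym)
  hence "k * int (m * n) = 0" by (simp only: gipow_h_eq_fps_X_iff)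
  hence "k = 0" using m n by simp
  thus "x = y" using xk yG by simp
qed

lemma Rf_commute_Tf: "g \<in> Rf \<Longrightarrow> t \<in> Tf \<Longrightarrow> g oo t = t oo g"
proof -
  assume g: "g \<in> Rf" and t: "t \<in> Tf"
  have gG: "g \<in> germG" and tG: "t \<in> germG" using g t by (simp_all add: Rf_germG Tf_iff Cf_germG)
  define z where "z = fps_inv g oo t oo g"
  obtain n where n: "n > 0" "gnpow t n = fps_X" using t unfolding Tf_iff by blast
  have "gnpow z n = fps_X" using gipow_conj[OF gG tG, of "int n"] n gG by (simp add: z_def)
  hence "z \<in> Tf" using Rf_conj_Cf[OF g Tf_Cf[OF t]] n(1) by (auto simp: Tf_iff z_def)
  moreover have "mult z = mult t"
    using gG tG mult_nonzero[OF gG] by (simp add: z_def mult_compose mult_fps_inv)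
  ultimately have "z = t" using mult_inj_on_Tf t by (auto dest: inj_onD)
  hence "t oo g = g oo t" unfolding z_def by (rule conj_eq_iff_commute[OF gG tG, THEN iffD1])
  thus ?thesis by (rule sym)
qed

lemma Rf_square_in_Cf: "g \<in> Rf \<Longrightarrow> g oo g \<in> Cf"
proof -
  assume g: "g \<in> Rf"
  hence gG: "g \<in> germG" by (rule Rf_germG)
  have "fps_inv (g oo g) oo f oo (g oo g) = fps_inv g oo (fps_inv g oo f oo g) oo g"
    using gG f_in_G by (simp add: fps_inv_compose)
  also have "\<dots> = fps_inv g oo fps_inv f oo g" by (simp only: Rf_conj_f[OF g])
  also have "\<dots> = fps_inv (fps_inv g oo f oo g)" using gG f_in_G by (simp add: fps_inv_compose)
  also have "\<dots> = f" using Rf_conj_f[OF g] f_in_G by simp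
  finally have "f oo (g oo g) = g oo g oo f"
    by (rule conj_eq_iff_commute[OF germG_compose[OF gG gG] f_in_G, THEN iffD1])
  thus ?thesis using gG by (simp add: Cf_iff)
qed

lemma Rf_not_in_Cf: "g \<in> Rf \<Longrightarrow> g \<notin> Cf"
proof
  assume g: "g \<in> Rf" and "g \<in> Cf"
  hence "fps_inv f = f" using Cf_conj_f Rf_conj_f by metis
  hence "f oo f = fps_X" using fps_compose_fps_inv_self[OF f_in_G] by simp
  hence "gipow f 2 = fps_X" using gipow_add[OF f_in_G, of 1 1] f_in_G by simp
  thus False using gipow_f_eq_fps_X_iff by simp
qed

definition Mf :: "complex set" where "Mf = mult ` Cf"

definition qf :: nat where "qf = card Mf"

lemma qf_dvd_p: "qf dvd p" and Mf_eq: "Mf = {z. z ^ qf = 1}"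
proof -
  have "1 \<in> Mf" using fps_X_in_Cf by (force simp: Mf_def)
  moreover have "x * y \<in> Mf" if xy: "x \<in> Mf" "y \<in> Mf" for x y
  proof -
    obtain u v where "u \<in> Cf" "v \<in> Cf" "x = mult u" "y = mult v" using xy unfolding Mf_def by blast
    thus ?thesis unfolding Mf_def by (intro image_eqI[of _ _ "u oo v"]) (simp_all add: mult_compose Cf_germG Cf_compose)
  qed
  moreover have "x ^ p = 1" if "x \<in> Mf" for x using that mult_power_p_Cf by (auto simp: Mf_def)
  ultimately show "qf dvd p" "Mf = {z. z ^ qf = 1}"
    unfolding qf_def using subgroup_of_roots_of_unity[OF p_pos, of Mf] by blast+
qed

lemma qf_pos: "0 < qf"
  using qf_dvd_p p_pos by (cases qf) auto

lemma mult_power_qf_Cf: "x \<in> Cf \<Longrightarrow> mult x ^ qf = 1"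
  using Mf_eq by (auto simp: Mf_def)

lemma prim_root_in_Mf: "prim_root qf \<in> Mf"
  using Mf_eq prim_root_power_eq_1_iff[OF qf_pos] by simp

lemma Cf1_iff: "x \<in> centraliser f germG1 \<longleftrightarrow> x \<in> Cf \<and> mult x = 1"
  by (auto simp: centraliser_def germG1_def mult_def)

lemma gcoset_Cf1: "x \<in> Cf \<Longrightarrow> gcoset x (centraliser f germG1) = {y \<in> Cf. mult y = mult x}"
proof safe
  fix y assume x: "x \<in> Cf" and "y \<in> gcoset x (centraliser f germG1)"
  then obtain k where "k \<in> centraliser f germG1" "y = x oo k" unfolding gcoset_def by blast
  hence k: "k \<in> Cf" "mult k = 1" "y = x oo k" by (simp_all add: Cf1_iff)
  show "y \<in> Cf" using k x by (simp add: Cf_compose)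
  show "mult y = mult x" using k by (simp add: mult_compose Cf_germG)
next
  fix y assume x: "x \<in> Cf" and y: "y \<in> Cf" "mult y = mult x"
  have xG: "x \<in> germG" and yG: "y \<in> germG" using x y(1) by (simp_all add: Cf_germG)
  have "mult (fps_inv x oo y) = 1" using y(2) yG mult_nonzero[OF xG] by (simp add: mult_compose mult_fps_inv)
  hence "fps_inv x oo y \<in> centraliser f germG1"
    using Cf_compose[OF Cf_fps_inv[OF x] y(1)] by (simp add: Cf1_iff)
  moreover have "y = x oo (fps_inv x oo y)" using xG yG by simp
  ultimately show "y \<in> gcoset x (centraliser f germG1)" unfolding gcoset_def by blast
qed

lemma index_Cf1: "gindex Cf (centraliser f germG1) = qf"
proof -
  have "{gcoset g (centraliser f germG1) | g. g \<in> Cf} = (\<lambda>z. {y \<in> Cf. mult y = z}) ` Mf"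
    using gcoset_Cf1 by (auto simp: Mf_def)
  moreover have "inj_on (\<lambda>z. {y \<in> Cf. mult y = z}) Mf"
    by (auto simp: inj_on_def Mf_def)
  ultimately show ?thesis unfolding gindex_def qf_def by (simp add: card_image)
qed

lemma Rf_mult_square:
  "g \<in> Rf \<Longrightarrow> odd (p div qf) \<and> (\<exists>a. odd a \<and> mult (g oo g) = prim_root qf ^ a)"
proof -
  assume g: "g \<in> Rf"
  have "mult (g oo g) = mult g ^ 2" using Rf_germG[OF g] by (simp add: mult_compose power2_eq_square)
  moreover have "(mult g ^ 2) ^ qf = 1"
    using mult_power_qf_Cf[OF Rf_square_in_Cf[OF g]] calculation by simp
  ultimately show ?thesis
    using square_of_root_of_minus_one[OF qf_pos qf_dvd_p mult_power_p_Rf[OF g]] by simp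
qed

lemma p_div_qf_odd: "odd (p div qf)"
  using f_reversible Rf_mult_square by (auto simp: reversible_def)

lemma gipow_compose_gipow_h:
  assumes x: "x \<in> Cf"
  shows "gipow (x oo gipow h j) k = gipow x k oo gipow h (j * k)"
proof -
  have xG: "x \<in> germG" using x by (rule Cf_germG)
  have "x oo gipow h j = gipow h j oo x"
    using gipow_commute[OF xG h_in_G h_central[OF x, symmetric]] by (rule sym)
  thus ?thesis using gipow_compose_distrib[OF xG germG_gipow[OF h_in_G]] gipow_mult[OF h_in_G, of j k]
    by simp
qed

lemma Cf_eq_compose_gipow_h:
  assumes "x \<in> Cf" "y \<in> Cf" "mult x = mult y"
  obtains b where "y = x oo gipow h b"
proof -
  have xG: "x \<in> germG" and yG: "y \<in> germG" using assms by (simp_all add: Cf_germG)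
  have "mult (fps_inv x oo y) = 1" using assms(3) yG mult_nonzero[OF xG] by (simp add: mult_compose mult_fps_inv)
  then obtain b where b: "fps_inv x oo y = gipow h b"
    using Cf_mult_1_eq_gipow_h Cf_compose[OF Cf_fps_inv[OF assms(1)] assms(2)] by blast
  have "y = x oo (fps_inv x oo y)" using xG yG by simp
  hence "y = x oo gipow h b" by (simp only: b)
  thus ?thesis by (rule that)
qed

lemma Rf_conj_compose_gipow_h:
  assumes "g \<in> Rf" "x \<in> germG"
  shows "fps_inv g oo (x oo gipow h b) oo g = (fps_inv g oo x oo g) oo gipow h (- b)"
  using conj_compose[OF Rf_germG[OF assms(1)] assms(2) germG_gipow[OF h_in_G]]
    Rf_conj_gipow_h[OF assms(1)] h_in_G by (simp add: gipow_neg)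

lemma Rf_square_eq_compose_gipow_h:
  assumes g: "g \<in> Rf" and x: "x \<in> Cf" "mult x = mult (g oo g)"
  obtains b where "g oo g = x oo gipow h b" and "fps_inv g oo x oo g = x oo gipow h (2 * b)"
proof -
  have gG: "g \<in> germG" and xG: "x \<in> germG" using g x by (simp_all add: Rf_germG Cf_germG)
  obtain b where b: "g oo g = x oo gipow h b"
    using Cf_eq_compose_gipow_h[OF x(1) Rf_square_in_Cf[OF g] x(2)] by blast
  have "x oo gipow h b = fps_inv g oo (x oo gipow h b) oo g" using gG by (simp flip: b)
  also have "\<dots> = (fps_inv g oo x oo g) oo gipow h (- b)" by (rule Rf_conj_compose_gipow_h[OF g xG])
  finally have "(fps_inv g oo x oo g) oo gipow h (- b) oo gipow h b = x oo gipow h b oo gipow h b"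
    by simp
  moreover have "gipow h (2 * b) = gipow h b oo gipow h b" using gipow_add[OF h_in_G, of b b] by simp
  ultimately have "fps_inv g oo x oo g = x oo gipow h (2 * b)"
    using gG xG h_in_G by (simp add: gipow_neg)
  thus ?thesis using b that by simp
qed

lemma exists_prim_torsion: "\<exists>t \<in> Tf. mult t = prim_root qf"
proof -
  obtain g where g: "g \<in> Rf" using f_reversible by (auto simp: reversible_def)
  obtain c where c: "c \<in> Cf" "mult c = prim_root qf" using prim_root_in_Mf by (auto simp: Mf_def)
  have cG: "c \<in> germG" using c by (simp add: Cf_germG)
  have "mult (gipow c (int qf)) = 1"
    using c mult_gipow[OF cG, of "int qf"] prim_root_power_eq_1_iff[OF qf_pos, of qf] by simp
  then obtain k where k: "gipow c (int qf) = gipow h k" using Cf_mult_1_eq_gipow_h Cf_gipow[OF c(1)] by blast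
  obtain a where a: "odd a" "mult (g oo g) = prim_root qf ^ a" using Rf_mult_square[OF g] by blast
  have "mult (gipow c (int a)) = mult (g oo g)" using a c mult_gipow[OF cG, of "int a"] by simp
  then obtain b where b: "fps_inv g oo gipow c (int a) oo g = gipow c (int a) oo gipow h (2 * b)"
    using Rf_square_eq_compose_gipow_h[OF g Cf_gipow[OF c(1)]] by blast
  have gG: "g \<in> germG" using g by (rule Rf_germG)
  have "mult c = mult (fps_inv g oo c oo g)"
    using gG cG mult_nonzero[OF gG] by (simp add: mult_compose mult_fps_inv)
  then obtain j where j: "fps_inv g oo c oo g = c oo gipow h j"
    using Cf_eq_compose_gipow_h[OF c(1) Rf_conj_Cf[OF g c(1)]] by blast
  have conj_c: "fps_inv g oo gipow c m oo g = gipow c m oo gipow h (j * m)" for m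
    using gipow_conj[OF gG cG, of m] gipow_compose_gipow_h[OF c(1)] j by simp
  \<comment> \<open>conjugating \<open>c ^ a\<close> and \<open>c ^ q\<close> by the reverser yields two constraints on the shift \<open>j\<close>\<close>
  have "gipow h (j * int a) = gipow h (2 * b)"
    using conj_c[of "int a"] b cG h_in_G by simp
  hence "j * int a = 2 * b" by (simp only: gipow_h_eq_iff)
  hence "even (j * int a)" by simp
  hence "even j" using a(1) by simp
  then obtain i where i: "j = 2 * i" by blast
  have "gipow h (- k) = gipow h (k + j * int qf)"
    using conj_c[of "int qf"] Rf_conj_gipow_h[OF g, of k] k h_in_G by (simp add: gipow_neg gipow_add)
  hence ki: "k = - i * int qf" using i by (simp add: gipow_h_eq_iff)
  define t where "t = c oo gipow h i"
  have "gnpow t qf = fps_X"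
    using gipow_compose_gipow_h[OF c(1), of i "int qf"] k ki h_in_G by (simp add: t_def gipow_add[symmetric])
  hence "t \<in> Tf" using qf_pos Cf_compose[OF c(1) Cf_gipow[OF h_in_Cf]] by (auto simp: Tf_iff t_def)
  moreover have "mult t = prim_root qf" using c h_in_G by (simp add: t_def mult_compose mult_gipow mult_h)
  ultimately show ?thesis by blast
qed

lemma mult_image_Tf: "mult ` Tf = Mf"
proof
  show "mult ` Tf \<subseteq> Mf" by (auto simp: Mf_def Tf_iff)
  show "Mf \<subseteq> mult ` Tf"
  proof
    fix z assume "z \<in> Mf"
    then obtain k where k: "z = prim_root qf ^ k" using Mf_eq root_of_unity_eq_power[OF qf_pos] by auto
    obtain t where t: "t \<in> Tf" "mult t = prim_root qf" using exists_prim_torsion by blast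
    have "mult (gipow t (int k)) = z" using t k mult_gipow[of t "int k"] by (simp add: Tf_iff Cf_germG)
    thus "z \<in> mult ` Tf" using Tf_gipow[OF t(1)] by blast
  qed
qed

lemma card_Tf: "card Tf = qf"
  using card_image[OF mult_inj_on_Tf] mult_image_Tf by (simp add: qf_def)

lemma prim_torsion_gnpow_eq_fps_X_iff:
  assumes t: "t \<in> Tf" "mult t = prim_root qf"
  shows "gnpow t n = fps_X \<longleftrightarrow> qf dvd n"
proof -
  have tG: "t \<in> germG" using t by (simp add: Tf_iff Cf_germG)
  have "gnpow t n \<in> Tf" using Tf_gipow[OF t(1), of "int n"] by simp
  hence "gnpow t n = fps_X \<longleftrightarrow> mult (gnpow t n) = mult fps_X"
    using inj_onD[OF mult_inj_on_Tf _ _ fps_X_in_Tf] by (intro iffI) simp_all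
  also have "\<dots> \<longleftrightarrow> prim_root qf ^ n = 1" using t mult_gipow[OF tG, of "int n"] by simp
  also have "\<dots> \<longleftrightarrow> qf dvd n" by (rule prim_root_power_eq_1_iff[OF qf_pos])
  finally show ?thesis .
qed

lemma Rf_square_eq_prim_torsion_power:
  assumes g: "g \<in> Rf" and t: "t \<in> Tf" "mult t = prim_root qf"
  obtains a where "odd a" and "g oo g = gnpow t a"
proof -
  have tG: "t \<in> germG" using t by (simp add: Tf_iff Cf_germG)
  obtain a where a: "odd a" "mult (g oo g) = prim_root qf ^ a" using Rf_mult_square[OF g] by blast
  have ta: "gnpow t a \<in> Tf" using Tf_gipow[OF t(1), of "int a"] by simp
  have "mult (gnpow t a) = mult (g oo g)" using a t mult_gipow[OF tG, of "int a"] by simp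
  then obtain b where b: "g oo g = gnpow t a oo gipow h b"
    and conj: "fps_inv g oo gnpow t a oo g = gnpow t a oo gipow h (2 * b)"
    using Rf_square_eq_compose_gipow_h[OF g Tf_Cf[OF ta]] by blast
  have "fps_inv g oo gnpow t a oo g = gnpow t a"
    by (rule conj_eq_iff_commute[OF Rf_germG[OF g] germG_gnpow[OF tG], THEN iffD2,
          OF Rf_commute_Tf[OF g ta, symmetric]])
  hence e: "gnpow t a oo gipow h (2 * b) = gnpow t a" using conj by simp
  have "gipow h (2 * b) = fps_inv (gnpow t a) oo (gnpow t a oo gipow h (2 * b))"
    using tG h_in_G by simp
  also have "\<dots> = fps_X" using tG by (simp only: e fps_inv_compose_self germG_gnpow)
  finally have "b = 0" by (simp add: gipow_h_eq_fps_X_iff)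
  thus ?thesis using that a(1) b by simp
qed

lemma Rf_square_exists:
  assumes t: "t \<in> Tf" "mult t = prim_root qf" and l: "odd l"
  shows "\<exists>g \<in> Rf. g oo g = gipow t l"
proof -
  have tG: "t \<in> germG" using t by (simp add: Tf_iff Cf_germG)
  obtain g0 where g0: "g0 \<in> Rf" using f_reversible by (auto simp: reversible_def)
  have g0G: "g0 \<in> germG" using g0 by (rule Rf_germG)
  obtain a where a: "odd a" "g0 oo g0 = gnpow t a" using Rf_square_eq_prim_torsion_power[OF g0 t] by blast
  define i where "i = (l - int a) div 2"
  have li: "l = int a + 2 * i" using l a(1) unfolding i_def by presburger
  define w where "w = gipow t i"
  have wT: "w \<in> Tf" unfolding w_def by (rule Tf_gipow[OF t(1)])
  have wG: "w \<in> germG" using wT by (simp add: Tf_iff Cf_germG)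
  \<comment> \<open>\<open>w\<close> commutes with \<open>f\<close> and with \<open>g0\<close>, so \<open>g0 \<circ> w\<close> is a reverser with square \<open>g0\<^sup>2 w\<^sup>2\<close>\<close>
  have "fps_inv (g0 oo w) oo f oo (g0 oo w) = fps_inv w oo (fps_inv g0 oo f oo g0) oo w"
    using g0G wG f_in_G by (simp add: fps_inv_compose)
  also have "\<dots> = fps_inv w oo fps_inv f oo w" by (simp only: Rf_conj_f[OF g0])
  also have "\<dots> = fps_inv (fps_inv w oo f oo w)" using wG f_in_G by (simp add: fps_inv_compose)
  also have "\<dots> = fps_inv f" by (simp only: Cf_conj_f[OF Tf_Cf[OF wT]])
  finally have gR: "g0 oo w \<in> Rf" using g0G wG by (simp add: Rf_iff)
  have "g0 oo w oo (g0 oo w) = g0 oo g0 oo (w oo w)"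
    using fps_compose_swap_right[OF Rf_commute_Tf[OF g0 wT, symmetric] wG g0G] g0G wG by simp
  also have "\<dots> = gipow t l"
    using a(2) tG gipow_add[OF tG, of "int a" "i + i"] gipow_add[OF tG, of i i] li by (simp add: w_def)
  finally show ?thesis using gR by blast
qed

lemma Rf_gnpow_eq_fps_X_iff:
  assumes g: "g \<in> Rf" and t: "t \<in> Tf" "mult t = prim_root qf" and ga: "g oo g = gnpow t a"
  shows "gnpow g n = fps_X \<longleftrightarrow> even n \<and> qf dvd a * (n div 2)"
proof -
  have gG: "g \<in> germG" and tG: "t \<in> germG" using g t by (simp_all add: Rf_germG Tf_iff Cf_germG)
  have even_power: "gnpow g (2 * m) = gnpow t (a * m)" for m
    using gipow_mult[OF gG, of 2 "int m"] gipow_mult[OF tG, of "int a" "int m"] gnpow_two[OF gG] ga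
    by (simp flip: gipow_int)
  show ?thesis
  proof (cases "even n")
    case True
    then obtain m where "n = 2 * m" by blast
    thus ?thesis using even_power[of m] prim_torsion_gnpow_eq_fps_X_iff[OF t] by simp
  next
    case False
    then obtain m where m: "n = Suc (2 * m)" by (metis oddE Suc_eq_plus1)
    have "gnpow g n \<noteq> fps_X"
    proof
      assume "gnpow g n = fps_X"
      hence "gnpow t (a * m) oo g = fps_X" using m even_power[of m] gnpow_Suc_right[OF gG] by simp
      hence "fps_inv (gnpow t (a * m)) = g" using gG tG by (intro fps_inv_unique) simp_all
      moreover have "fps_inv (gnpow t (a * m)) \<in> Cf"
        using Cf_fps_inv[OF Cf_gipow[OF Tf_Cf[OF t(1)], of "int (a * m)"]] by (simp only: gipow_int)
      ultimately show False using Rf_not_in_Cf[OF g] by simp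
    qed
    thus ?thesis using False by simp
  qed
qed

lemma gord_Rf:
  assumes g: "g \<in> Rf" and t: "t \<in> Tf" "mult t = prim_root qf"
    and ga: "g oo g = gnpow t a" and a: "odd a"
  shows "gord g = 2 * (qf div gcd a qf)"
proof (rule gord_eqI)
  define r where "r = qf div gcd a qf"
  show "0 < 2 * (qf div gcd a qf)" using qf_pos by (simp add: div_greater_zero_iff gcd_le2_nat)
  fix n
  have "gnpow g n = fps_X \<longleftrightarrow> even n \<and> r dvd n div 2"
    using Rf_gnpow_eq_fps_X_iff[OF g t ga] dvd_mult_iff_div_gcd_dvd[OF qf_pos] by (simp add: r_def)
  also have "\<dots> \<longleftrightarrow> 2 * r dvd n" by (auto elim!: evenE)
  finally show "gnpow g n = fps_X \<longleftrightarrow> 2 * (qf div gcd a qf) dvd n" by (simp add: r_def)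
qed

lemma gord_image_Rf: "gord ` Rf = {2 * r | r. 0 < r \<and> r dvd qf \<and> odd (qf div r)}"
proof -
  obtain t where t: "t \<in> Tf" "mult t = prim_root qf" using exists_prim_torsion by blast
  show ?thesis
  proof safe
    fix g assume g: "g \<in> Rf"
    then obtain a where a: "odd a" "g oo g = gnpow t a" using Rf_square_eq_prim_torsion_power[OF g t] by blast
    have "gord g = 2 * (qf div gcd a qf)" by (rule gord_Rf[OF g t a(2) a(1)])
    moreover have "0 < qf div gcd a qf" using qf_pos by (simp add: div_greater_zero_iff gcd_le2_nat)
    moreover have "qf div gcd a qf dvd qf" by (metis dvd_div_mult_self dvd_triv_left gcd_dvd2)
    moreover have "qf div (qf div gcd a qf) = gcd a qf" using qf_pos by (simp add: div_div_eq_right)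
    moreover have "odd (gcd a qf)" using a(1) by (metis dvd_trans gcd_dvd1)
    ultimately show "\<exists>r. gord g = 2 * r \<and> 0 < r \<and> r dvd qf \<and> odd (qf div r)" by auto
  next
    fix r assume r: "0 < r" "r dvd qf" "odd (qf div r)"
    define l where "l = qf div r"
    obtain g where g: "g \<in> Rf" "g oo g = gipow t (int l)"
      using Rf_square_exists[OF t, of "int l"] r(3) by (auto simp: l_def)
    obtain c where c: "qf = r * c" using r(2) by blast
    hence "l dvd qf" using r(1) by (simp add: l_def)
    hence "gcd l qf = l" by (simp add: gcd_proj1_if_dvd)
    moreover have "qf div l = r" using r qf_pos by (simp add: l_def div_div_eq_right)
    ultimately have "gord g = 2 * r" using gord_Rf[OF g(1) t _ r(3)[folded l_def]] g(2) by simp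
    thus "2 * r \<in> gord ` Rf" using g(1) by (metis image_eqI)
  qed
qed

lemma squares_Rf:
  assumes t: "t \<in> Tf" "mult t = prim_root qf"
  shows "{gnpow g 2 | g. g \<in> Rf} = {gipow t l | l. odd l}"
proof safe
  fix g assume g: "g \<in> Rf"
  then obtain a where a: "odd a" "g oo g = gnpow t a" using Rf_square_eq_prim_torsion_power[OF g t] by blast
  thus "\<exists>l. gnpow g 2 = gipow t l \<and> odd l"
    using gnpow_two[OF Rf_germG[OF g]] by (intro exI[of _ "int a"]) simp
next
  fix l :: int assume "odd l"
  then obtain g where "g \<in> Rf" "g oo g = gipow t l" using Rf_square_exists[OF t] by blast
  thus "\<exists>g'. gipow t l = gnpow g' 2 \<and> g' \<in> Rf" using gnpow_two[OF Rf_germG] by metis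
qed

end

text \<open>
  Non-flowability enters only through its consequence \<open>C\<^sub>f(G\<^sub>1) = \<langle>h\<rangle>\<close>, which is a hypothesis
  here; and of \<open>\<omega>\<close> only \<open>\<omega> \<in> torsion C\<^sub>f(G)\<close> is used, not that it generates the torsion.
\<close>

theorem theorem5p1:
  fixes p :: nat and f h \<omega> :: "complex fps" and d q \<delta> :: nat
  assumes fA: "f \<in> germAp p"
    and frev: "reversible f"
    and fnf: "\<not> flowable f"
    and hC: "h \<in> centraliser f germG1"
    and hgen: "centraliser f germG1 = range (gipow h)"
    and dpos: "0 < d" and hd: "gnpow h d = f"
    and qdef: "q = gindex (centraliser f germG) (centraliser f germG1)"
    and \<delta>def: "\<delta> = card (torsion (centraliser f germG))"
    and \<omega>T: "\<omega> \<in> torsion (centraliser f germG)"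
    and \<omega>gen: "torsion (centraliser f germG) = range (gipow \<omega>)"
  shows "(\<forall>g \<in> reversers f. g oo \<omega> = \<omega> oo g \<and>
            (\<forall>r::int. fps_inv g oo gipow h r oo g = fps_inv (gipow h r)))
       \<and> (\<delta> = q \<and> q dvd p \<and> odd (p div q))
       \<and> (mult \<omega> = exp (2 * pi * \<i> / of_nat \<delta>) \<longrightarrow>
            {gnpow g 2 | g. g \<in> reversers f} = {gipow \<omega> l | l. odd l})
       \<and> gord ` reversers f = {2 * r | r. 0 < r \<and> r dvd q \<and> odd (q div r)}"
proof -
  interpret reversible_germ p d f h
    using fA frev hC hgen dpos hd by unfold_locales
  have q: "q = qf" and \<delta>: "\<delta> = qf" using qdef index_Cf1 \<delta>def card_Tf by simp_all
  show ?thesis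
  proof (intro conjI ballI allI impI)
    fix g assume "g \<in> Rf"
    thus "g oo \<omega> = \<omega> oo g" by (rule Rf_commute_Tf[OF _ \<omega>T])
    fix r :: int
    show "fps_inv g oo gipow h r oo g = fps_inv (gipow h r)" by (rule Rf_conj_gipow_h[OF \<open>g \<in> Rf\<close>])
  next
    assume "mult \<omega> = exp (2 * pi * \<i> / of_nat \<delta>)"
    hence "mult \<omega> = prim_root qf" using \<delta> by (simp add: prim_root_def)
    thus "{gnpow g 2 | g. g \<in> Rf} = {gipow \<omega> l | l. odd l}" by (rule squares_Rf[OF \<omega>T])
  qed (use q \<delta> qf_dvd_p p_div_qf_odd gord_image_Rf in simp_all)
qed

end
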